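(* Let $\mathcal{H}$ be a real Hilbert space and $F:\mathcal{H}\rightrightarrows\mathcal{H}$ a set-valued operator with $\operatorname{zer}F:=\{x:0\in F(x)\}\neq\varnothing$. Let $(\gamma_n)_{n}\subset(0,+\infty)$ and $(\alpha_n)_n\subset[0,1]$. Assume there is a linear map $v:\mathcal{H}\to\mathcal{H}$ such that the pair $(F,v)$ is monotone and, for every $n$, $\gamma_nF+v$ is injective and $\operatorname{ran}v\subset\operatorname{ran}(\gamma_nF+v)$. Let $x_0,x_1\in\mathcal{H}$ and for $n\ge1$ define \[ y_n=x_n+\alpha_n(x_n-x_{n-1}),\qquad x_{n+1}=(\gamma_nF+v)^{-1}\big(v(y_n)\big), \] i.e. $x_{n+1}$ is the unique point with $v(y_n)\in\gamma_nF(x_{n+1})+v(x_{n+1})$. Let $x^*\in\operatorname{zer}F$ and $a_n:=\|v(x_n)-v(x^* )\|^2$. Then for each $n\ge1$, \[ a_{n+1}-a_n-\alpha_n(a_n-a_{n-1})\le(\alpha_n-1)\|v(x_{n+1})-v(x_n)\|^2+2\alpha_n\|v(x_n)-v(x_{n-1})\|^2 . \]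
   Context: For set-valued $F_1,F_2:\mathcal{H}\rightrightarrows\mathcal{H}$, the pair $(F_1,F_2)$ is monotone if $\langle x_1^*-y_1^*,x_2^*-y_2^*\rangle\ge0$ for all $x,y\in\mathcal{H}$, $x_1^*\in F_1(x)$, $y_1^*\in F_1(y)$, $x_2^*\in F_2(x)$, $y_2^*\in F_2(y)$. $\operatorname{ran}$ denotes the range (union of all values). *)

theory Defs
  imports "HOL-Analysis.Analysis"
begin

definition monotone_pair :: "('a::real_inner \<Rightarrow> 'a set) \<Rightarrow> ('a \<Rightarrow> 'a set) \<Rightarrow> bool" where
  "monotone_pair F1 F2 \<longleftrightarrow>
     (\<forall>x y x1 y1 x2 y2. x1 \<in> F1 x \<longrightarrow> y1 \<in> F1 y \<longrightarrow> x2 \<in> F2 x \<longrightarrow> y2 \<in> F2 y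
        \<longrightarrow> inner (x1 - y1) (x2 - y2) \<ge> 0)"

definition scaled_plus :: "real \<Rightarrow> ('a::real_vector \<Rightarrow> 'a set) \<Rightarrow> ('a \<Rightarrow> 'a) \<Rightarrow> 'a \<Rightarrow> 'a set" where
  "scaled_plus \<gamma> F v x = {\<gamma> *\<^sub>R u + v x | u. u \<in> F x}"

definition sv_injective :: "('a \<Rightarrow> 'b set) \<Rightarrow> bool" where
  "sv_injective G \<longleftrightarrow> (\<forall>x y z. z \<in> G x \<longrightarrow> z \<in> G y \<longrightarrow> x = y)"

definition sv_range :: "('a \<Rightarrow> 'b set) \<Rightarrow> 'b set" where
  "sv_range G = (\<Union>x. G x)"

definition zer :: "('a \<Rightarrow> 'b::zero set) \<Rightarrow> 'a set" where
  "zer F = {x. 0 \<in> F x}"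

end

theory Submission
  imports Defs
begin

text \<open>Testing the monotonicity of \<open>(F, v)\<close> at \<open>x\<^sub>n\<^sub>+\<^sub>1\<close> and at the zero \<open>x\<^sup>*\<close> shows that
  \<open>v y\<^sub>n - v x\<^sub>n\<^sub>+\<^sub>1\<close> makes a nonnegative inner product with \<open>v x\<^sub>n\<^sub>+\<^sub>1 - v x\<^sup>*\<close>. By linearity
  of \<open>v\<close> this is an inner-product inequality between the three errors
  \<open>v x\<^sub>k - v x\<^sup>*\<close>, \<open>k = n+1, n, n-1\<close>, and expanding squares turns it into the claimed
  estimate.\<close>

lemma scaled_plus_zer_inner_nonneg:
  fixes F :: "'a::real_inner \<Rightarrow> 'a set"
  assumes mono: "monotone_pair F (\<lambda>z. {v z})"
    and gamma: "\<gamma> \<ge> 0"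
    and w: "w \<in> scaled_plus \<gamma> F v x"
    and z: "z \<in> zer F"
  shows "inner (w - v x) (v x - v z) \<ge> 0"
proof -
  obtain u where u: "u \<in> F x" and w_eq: "w = \<gamma> *\<^sub>R u + v x"
    using w unfolding scaled_plus_def by blast
  have "0 \<in> F z"
    using z unfolding zer_def by simp
  then have "inner u (v x - v z) \<ge> 0"
    using mono u unfolding monotone_pair_def by force
  then show ?thesis
    using gamma by (simp add: w_eq)
qed

lemma inertial_norm_sq_estimate:
  fixes p q r :: "'a::real_inner" and a :: real
  assumes inner_nonneg: "inner (q + a *\<^sub>R (q - r) - p) p \<ge> 0"
    and a_nonneg: "0 \<le> a"
  shows "(norm p)\<^sup>2 - (norm q)\<^sup>2 - a * ((norm q)\<^sup>2 - (norm r)\<^sup>2)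
        \<le> (a - 1) * (norm (p - q))\<^sup>2 + 2 * a * (norm (q - r))\<^sup>2"
proof -
  \<comment> \<open>After expanding all squares, the gap between the two sides is the assumed inner
      product plus \<open>a \<parallel>(q - r) - (p - q)\<parallel>\<^sup>2\<close>.\<close>
  have "0 \<le> a * inner ((q - r) - (p - q)) ((q - r) - (p - q))"
    using a_nonneg by simp
  then show ?thesis
    using inner_nonneg
    by (simp add: power2_norm_eq_inner inner_simps inner_commute algebra_simps)
qed

theorem lemma4p1:
  fixes F :: "'a::{real_inner, complete_space} \<Rightarrow> 'a set"
    and v :: "'a \<Rightarrow> 'a"
    and \<gamma> \<alpha> :: "nat \<Rightarrow> real"
    and x :: "nat \<Rightarrow> 'a"
    and xstar :: 'a
  assumes zer_ne: "zer F \<noteq> {}"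
    and gamma_pos: "\<And>n. \<gamma> n > 0"
    and alpha_range: "\<And>n. 0 \<le> \<alpha> n \<and> \<alpha> n \<le> 1"
    and lin: "linear v"
    and mono: "monotone_pair F (\<lambda>z. {v z})"
    and inj: "\<And>n. sv_injective (scaled_plus (\<gamma> n) F v)"
    and ran: "\<And>n. range v \<subseteq> sv_range (scaled_plus (\<gamma> n) F v)"
    and iter: "\<And>n. n \<ge> 1 \<Longrightarrow>
        v (x n + \<alpha> n *\<^sub>R (x n - x (n - 1))) \<in> scaled_plus (\<gamma> n) F v (x (Suc n))"
    and xstar: "xstar \<in> zer F"
  shows "\<And>n. n \<ge> 1 \<Longrightarrow>
    (let a = (\<lambda>k. (norm (v (x k) - v xstar))\<^sup>2) in
      a (Suc n) - a n - \<alpha> n * (a n - a (n - 1))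
        \<le> (\<alpha> n - 1) * (norm (v (x (Suc n)) - v (x n)))\<^sup>2
          + 2 * \<alpha> n * (norm (v (x n) - v (x (n - 1))))\<^sup>2)"
proof -
  \<comment> \<open>\<open>inj\<close> and \<open>ran\<close> only make the iteration well defined; the estimate needs just \<open>iter\<close>.\<close>
  fix n :: nat
  assume "n \<ge> 1"
  define p where "p = v (x (Suc n)) - v xstar"
  define q where "q = v (x n) - v xstar"
  define r where "r = v (x (n - 1)) - v xstar"
  have "inner (v (x n + \<alpha> n *\<^sub>R (x n - x (n - 1))) - v (x (Suc n))) p \<ge> 0"
    unfolding p_def
    using scaled_plus_zer_inner_nonneg[OF mono _ iter[OF \<open>n \<ge> 1\<close>] xstar] gamma_pos[of n]
    by simp
  moreover have "v (x n + \<alpha> n *\<^sub>R (x n - x (n - 1))) - v (x (Suc n)) = q + \<alpha> n *\<^sub>R (q - r) - p"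
    unfolding p_def q_def r_def using lin by (simp add: linear_add linear_scale linear_diff)
  ultimately have "inner (q + \<alpha> n *\<^sub>R (q - r) - p) p \<ge> 0"
    by simp
  from inertial_norm_sq_estimate[OF this] alpha_range[of n]
  show "?thesis n"
    unfolding Let_def p_def q_def r_def by simp
qed

end
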